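(* Let $\lambda\in(0,1]$, $S^{\min}\le S^{\max}$, $U^{\min}\le 0\le U^{\max}$ and real numbers $\underline{D}g<\overline{D}g$ be given, with $W^{\max},\Gamma^{\min}(W),\Gamma^{\max}(W)$, $M(\Gamma)$ as in the context. Consider the parameter optimization problem \[ \textbf{(PO)}\quad \text{minimize } M(\Gamma)/W \quad\text{subject to } \Gamma^{\min}(W)\le\Gamma\le\Gamma^{\max}(W),\ 0<W\le W^{\max}, \] over $(\Gamma,W)$, and the semidefinite program \[ \text{minimize } N^{u}+\lambda(1-\lambda)N^{s} \] over $(\Gamma,W,N^u,N^s)$ subject to $\Gamma^{\min}(W)\le\Gamma\le\Gamma^{\max}(W)$, $0<W\le W^{\max}$, and \[ \begin{bmatrix} N^u & U^{\min}+(1-\lambda)\Gamma\\ U^{\min}+(1-\lambda)\Gamma & 2W\end{bmatrix}\succeq0,\quad \begin{bmatrix} N^u & U^{\max}+(1-\lambda)\Gamma\\ U^{\max}+(1-\lambda)\Gamma & 2W\end{bmatrix}\succeq0, \] \[ \begin{bmatrix} N^s & S^{\min}+\Gamma\\ S^{\min}+\Gamma & W\end{bmatrix}\succeq0,\quad \begin{bmatrix} N^s & S^{\max}+\Gamma\\ S^{\max}+\Gamma & W\end{bmatrix}\succeq0. \] Then \textbf{(PO)} can be solved via this semidefinite program: the two problems have the same optimal value, and $(\Gamma,W)$ is optimal for \textbf{(PO)} if and only if there exist $N^u,N^s$ such that $(\Gamma,W,N^u,N^s)$ is optimal for the semidefinite program.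
   Context: Definitions: $W^{\max}=\dfrac{(S^{\max}-S^{\min})-(U^{\max}-U^{\min})}{\overline{D}g-\underline{D}g}$; $\Gamma^{\min}(W)=\frac1\lambda\big(-W\underline{D}g+U^{\max}-S^{\max}\big)$ and $\Gamma^{\max}(W)=\frac1\lambda\big(-W\overline{D}g-S^{\min}+U^{\min}\big)$ (affine in $W$); $M(\Gamma)=M^u(\Gamma)+\lambda(1-\lambda)M^s(\Gamma)$ with $M^{u}(\Gamma)=\tfrac12\max\big((U^{\min}+(1-\lambda)\Gamma)^2,(U^{\max}+(1-\lambda)\Gamma)^2\big)$ and $M^{s}(\Gamma)=\max\big((S^{\min}+\Gamma)^2,(S^{\max}+\Gamma)^2\big)$. In the paper, $M(\Gamma)/W$ is the sub-optimality bound of an online storage control algorithm with shift parameter $\Gamma$ and weight parameter $W$. *)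

theory Defs
  imports "HOL-Analysis.Analysis"
begin

definition psd :: "real^'n^'n \<Rightarrow> bool" where
  "psd A \<longleftrightarrow> transpose A = A \<and> (\<forall>x::real^'n. 0 \<le> x \<bullet> (A *v x))"

definition mat2 :: "real \<Rightarrow> real \<Rightarrow> real \<Rightarrow> real \<Rightarrow> real^2^2" where
  "mat2 a b c d = vector [vector [a, b], vector [c, d]]"

definition Wmax :: "real \<Rightarrow> real \<Rightarrow> real \<Rightarrow> real \<Rightarrow> real \<Rightarrow> real \<Rightarrow> real" where
  "Wmax Smin Smax Umin Umax Dl Du = ((Smax - Smin) - (Umax - Umin)) / (Du - Dl)"

definition Gmin :: "real \<Rightarrow> real \<Rightarrow> real \<Rightarrow> real \<Rightarrow> real \<Rightarrow> real" where
  "Gmin lam Smax Umax Dl W = (1 / lam) * (- W * Dl + Umax - Smax)"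

definition Gmax :: "real \<Rightarrow> real \<Rightarrow> real \<Rightarrow> real \<Rightarrow> real \<Rightarrow> real" where
  "Gmax lam Smin Umin Du W = (1 / lam) * (- W * Du - Smin + Umin)"

definition Mu :: "real \<Rightarrow> real \<Rightarrow> real \<Rightarrow> real \<Rightarrow> real" where
  "Mu lam Umin Umax G = (1/2) * max ((Umin + (1 - lam) * G)^2) ((Umax + (1 - lam) * G)^2)"

definition Ms :: "real \<Rightarrow> real \<Rightarrow> real \<Rightarrow> real" where
  "Ms Smin Smax G = max ((Smin + G)^2) ((Smax + G)^2)"

definition Mfun :: "real \<Rightarrow> real \<Rightarrow> real \<Rightarrow> real \<Rightarrow> real \<Rightarrow> real \<Rightarrow> real" where
  "Mfun lam Smin Smax Umin Umax G = Mu lam Umin Umax G + lam * (1 - lam) * Ms Smin Smax G"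

definition PO_feas :: "real \<Rightarrow> real \<Rightarrow> real \<Rightarrow> real \<Rightarrow> real \<Rightarrow> real \<Rightarrow> real \<Rightarrow> (real \<times> real) set" where
  "PO_feas lam Smin Smax Umin Umax Dl Du =
     {(G, W). Gmin lam Smax Umax Dl W \<le> G \<and> G \<le> Gmax lam Smin Umin Du W
              \<and> 0 < W \<and> W \<le> Wmax Smin Smax Umin Umax Dl Du}"

definition PO_obj :: "real \<Rightarrow> real \<Rightarrow> real \<Rightarrow> real \<Rightarrow> real \<Rightarrow> real \<times> real \<Rightarrow> real" where
  "PO_obj lam Smin Smax Umin Umax p = Mfun lam Smin Smax Umin Umax (fst p) / snd p"

definition SDP_feas :: "real \<Rightarrow> real \<Rightarrow> real \<Rightarrow> real \<Rightarrow> real \<Rightarrow> real \<Rightarrow> real \<Rightarrow> (real \<times> real \<times> real \<times> real) set" where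
  "SDP_feas lam Smin Smax Umin Umax Dl Du =
     {(G, W, Nu, Ns). Gmin lam Smax Umax Dl W \<le> G \<and> G \<le> Gmax lam Smin Umin Du W
        \<and> 0 < W \<and> W \<le> Wmax Smin Smax Umin Umax Dl Du
        \<and> psd (mat2 Nu (Umin + (1 - lam) * G) (Umin + (1 - lam) * G) (2 * W))
        \<and> psd (mat2 Nu (Umax + (1 - lam) * G) (Umax + (1 - lam) * G) (2 * W))
        \<and> psd (mat2 Ns (Smin + G) (Smin + G) W)
        \<and> psd (mat2 Ns (Smax + G) (Smax + G) W)}"

definition SDP_obj :: "real \<Rightarrow> real \<times> real \<times> real \<times> real \<Rightarrow> real" where
  "SDP_obj lam q = (case q of (G, W, Nu, Ns) \<Rightarrow> Nu + lam * (1 - lam) * Ns)"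

definition is_opt :: "'a set \<Rightarrow> ('a \<Rightarrow> real) \<Rightarrow> 'a \<Rightarrow> bool" where
  "is_opt F f x \<longleftrightarrow> x \<in> F \<and> (\<forall>y\<in>F. f x \<le> f y)"

end

theory Submission
  imports Defs
begin

text \<open>For \<open>W > 0\<close>, a symmetric 2x2 matrix \<open>[[N, a], [a, W]]\<close> is positive semidefinite
  iff \<open>a\<^sup>2 \<le> N W\<close> (Schur complement). Hence the SDP constraints say exactly
  \<open>N\<^sup>u \<ge> M\<^sup>u(\<Gamma>)/W\<close> and \<open>N\<^sup>s \<ge> M\<^sup>s(\<Gamma>)/W\<close>: the SDP is the epigraph reformulation of (PO),
  so the map \<open>(\<Gamma>, W) \<mapsto> (\<Gamma>, W, M\<^sup>u(\<Gamma>)/W, M\<^sup>s(\<Gamma>)/W)\<close> and the projection back to \<open>(\<Gamma>, W)\<close>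
  transfer optimal values and optimal points in both directions.\<close>

lemma inner_mat2_mult_vec:
  "x \<bullet> (mat2 n a b w *v x) = n * (x$1)\<^sup>2 + (a + b) * (x$1) * (x$2) + w * (x$2)\<^sup>2"
  by (simp add: mat2_def inner_vec_def matrix_vector_mult_def sum_2 power2_eq_square algebra_simps)

lemma transpose_mat2_sym: "transpose (mat2 n a a w) = mat2 n a a w"
  by (simp add: mat2_def transpose_def vec_eq_iff forall_2)

lemma psd_mat2_iff:
  assumes "w > 0"
  shows "psd (mat2 n a a w) \<longleftrightarrow> a\<^sup>2 \<le> n * w"
proof
  assume "psd (mat2 n a a w)"
  then have "0 \<le> (vector [w, -a] :: real^2) \<bullet> (mat2 n a a w *v vector [w, -a])"
    unfolding psd_def by blast
  then have "0 \<le> w * (n * w - a\<^sup>2)"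
    unfolding inner_mat2_mult_vec by (simp add: power2_eq_square algebra_simps)
  then show "a\<^sup>2 \<le> n * w" using assms by (simp add: zero_le_mult_iff)
next
  assume h: "a\<^sup>2 \<le> n * w"
  show "psd (mat2 n a a w)" unfolding psd_def transpose_mat2_sym
  proof (intro conjI allI refl)
    fix x :: "real^2"
    have "w * (x \<bullet> (mat2 n a a w *v x)) = (w * x$2 + a * x$1)\<^sup>2 + (n * w - a\<^sup>2) * (x$1)\<^sup>2"
      unfolding inner_mat2_mult_vec by (simp add: power2_eq_square algebra_simps)
    also have "\<dots> \<ge> 0" using h by simp
    finally show "0 \<le> x \<bullet> (mat2 n a a w *v x)" using assms by (simp add: zero_le_mult_iff)
  qed
qed

lemma INF_eq_if_proj_lift:
  assumes proj: "\<And>q. q \<in> B \<Longrightarrow> \<pi> q \<in> A \<and> f (\<pi> q) \<le> g q"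
    and lift: "\<And>p. p \<in> A \<Longrightarrow> L p \<in> B \<and> g (L p) = f p"
  shows "(INF p\<in>A. ereal (f p)) = (INF q\<in>B. ereal (g q))"
proof (rule antisym)
  show "(INF p\<in>A. ereal (f p)) \<le> (INF q\<in>B. ereal (g q))"
    using proj by (intro INF_mono) force
  show "(INF q\<in>B. ereal (g q)) \<le> (INF p\<in>A. ereal (f p))"
    using lift by (intro INF_mono) force
qed

lemma is_opt_iff_if_proj_lift:
  assumes proj: "\<And>q. q \<in> B \<Longrightarrow> \<pi> q \<in> A \<and> f (\<pi> q) \<le> g q"
    and lift: "\<And>p. p \<in> A \<Longrightarrow> L p \<in> B \<and> \<pi> (L p) = p \<and> g (L p) = f p"
  shows "is_opt A f p \<longleftrightarrow> (\<exists>q. \<pi> q = p \<and> is_opt B g q)"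
proof
  assume p: "is_opt A f p"
  have "is_opt B g (L p)"
    unfolding is_opt_def
  proof (intro conjI ballI)
    show "L p \<in> B" using lift p by (simp add: is_opt_def)
    fix q assume "q \<in> B"
    have "g (L p) = f p" using lift p by (simp add: is_opt_def)
    also have "\<dots> \<le> f (\<pi> q)" using p proj \<open>q \<in> B\<close> by (simp add: is_opt_def)
    also have "\<dots> \<le> g q" using proj \<open>q \<in> B\<close> by simp
    finally show "g (L p) \<le> g q" .
  qed
  moreover have "\<pi> (L p) = p" using lift p by (simp add: is_opt_def)
  ultimately show "\<exists>q. \<pi> q = p \<and> is_opt B g q" by blast
next
  assume "\<exists>q. \<pi> q = p \<and> is_opt B g q"
  then obtain q where q: "\<pi> q = p" "is_opt B g q" by blast
  show "is_opt A f p"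
    unfolding is_opt_def
  proof (intro conjI ballI)
    show "p \<in> A" using proj q by (auto simp: is_opt_def)
    fix p' assume "p' \<in> A"
    have "f p \<le> g q" using proj q by (auto simp: is_opt_def)
    also have "\<dots> \<le> g (L p')" using lift[OF \<open>p' \<in> A\<close>] q(2) unfolding is_opt_def by blast
    also have "\<dots> = f p'" using lift \<open>p' \<in> A\<close> by simp
    finally show "f p \<le> f p'" .
  qed
qed

lemma SDP_feas_iff:
  "(G, W, Nu, Ns) \<in> SDP_feas lam Smin Smax Umin Umax Dl Du \<longleftrightarrow>
     (G, W) \<in> PO_feas lam Smin Smax Umin Umax Dl Du
     \<and> Mu lam Umin Umax G \<le> Nu * W \<and> Ms Smin Smax G \<le> Ns * W"
proof (cases "W > 0")
  case True
  then have "2 * W > 0" by simp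
  with True show ?thesis
    by (auto simp: SDP_feas_def PO_feas_def Mu_def Ms_def psd_mat2_iff)
qed (auto simp: SDP_feas_def PO_feas_def)

lemma PO_obj_eq:
  "PO_obj lam Smin Smax Umin Umax (G, W)
     = Mu lam Umin Umax G / W + lam * (1 - lam) * (Ms Smin Smax G / W)"
  unfolding PO_obj_def Mfun_def by (simp add: add_divide_distrib)

definition SDP_lift :: "real \<Rightarrow> real \<Rightarrow> real \<Rightarrow> real \<Rightarrow> real \<Rightarrow> real \<times> real \<Rightarrow> real \<times> real \<times> real \<times> real" where
  "SDP_lift lam Smin Smax Umin Umax p =
     (case p of (G, W) \<Rightarrow> (G, W, Mu lam Umin Umax G / W, Ms Smin Smax G / W))"

lemma SDP_lift_feas:
  assumes "p \<in> PO_feas lam Smin Smax Umin Umax Dl Du"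
  shows "SDP_lift lam Smin Smax Umin Umax p \<in> SDP_feas lam Smin Smax Umin Umax Dl Du
    \<and> SDP_obj lam (SDP_lift lam Smin Smax Umin Umax p) = PO_obj lam Smin Smax Umin Umax p"
proof -
  obtain G W where p: "p = (G, W)" by fastforce
  with assms have "W > 0" by (simp add: PO_feas_def)
  with assms show ?thesis
    unfolding p SDP_lift_def by (simp add: SDP_feas_iff SDP_obj_def PO_obj_eq)
qed

lemma SDP_feas_proj:
  assumes "0 \<le> lam" "lam \<le> 1"
    and "(G, W, Nu, Ns) \<in> SDP_feas lam Smin Smax Umin Umax Dl Du"
  shows "(G, W) \<in> PO_feas lam Smin Smax Umin Umax Dl Du
    \<and> PO_obj lam Smin Smax Umin Umax (G, W) \<le> SDP_obj lam (G, W, Nu, Ns)"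
proof -
  from assms(3) have feas: "(G, W) \<in> PO_feas lam Smin Smax Umin Umax Dl Du"
    and u: "Mu lam Umin Umax G \<le> Nu * W" and s: "Ms Smin Smax G \<le> Ns * W"
    by (auto simp: SDP_feas_iff)
  from feas have "W > 0" by (simp add: PO_feas_def)
  with u s have "Mu lam Umin Umax G / W \<le> Nu" "Ms Smin Smax G / W \<le> Ns"
    by (simp_all add: divide_le_eq)
  moreover have "0 \<le> lam * (1 - lam)" using assms(1,2) by simp
  ultimately have "Mu lam Umin Umax G / W + lam * (1 - lam) * (Ms Smin Smax G / W)
      \<le> Nu + lam * (1 - lam) * Ns"
    by (intro add_mono mult_left_mono)
  then show ?thesis
    using feas by (simp only: PO_obj_eq SDP_obj_def prod.case)
qed

theorem lemma1:
  fixes lam Smin Smax Umin Umax Dl Du :: real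
  assumes "0 < lam" and "lam \<le> 1"
    and "Smin \<le> Smax" and "Umin \<le> 0" and "0 \<le> Umax"
    and "Dl < Du"
  shows "(INF p\<in>PO_feas lam Smin Smax Umin Umax Dl Du. ereal (PO_obj lam Smin Smax Umin Umax p))
           = (INF q\<in>SDP_feas lam Smin Smax Umin Umax Dl Du. ereal (SDP_obj lam q))
         \<and> (\<forall>G W. is_opt (PO_feas lam Smin Smax Umin Umax Dl Du) (PO_obj lam Smin Smax Umin Umax) (G, W)
              \<longleftrightarrow> (\<exists>Nu Ns. is_opt (SDP_feas lam Smin Smax Umin Umax Dl Du) (SDP_obj lam) (G, W, Nu, Ns)))"
proof -
  define \<pi> :: "real \<times> real \<times> real \<times> real \<Rightarrow> real \<times> real" where "\<pi> q = (fst q, fst (snd q))" for q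
  define L where "L = SDP_lift lam Smin Smax Umin Umax"
  have proj: "\<pi> q \<in> PO_feas lam Smin Smax Umin Umax Dl Du
      \<and> PO_obj lam Smin Smax Umin Umax (\<pi> q) \<le> SDP_obj lam q"
    if "q \<in> SDP_feas lam Smin Smax Umin Umax Dl Du" for q
    using that SDP_feas_proj[of lam] assms(1,2) unfolding \<pi>_def by (cases q) auto
  have lift_obj: "L p \<in> SDP_feas lam Smin Smax Umin Umax Dl Du
      \<and> SDP_obj lam (L p) = PO_obj lam Smin Smax Umin Umax p"
    if "p \<in> PO_feas lam Smin Smax Umin Umax Dl Du" for p
    using SDP_lift_feas[OF that] unfolding L_def .
  moreover have "\<pi> (L p) = p" for p
    unfolding L_def \<pi>_def SDP_lift_def by (cases p) simp
  ultimately have lift: "L p \<in> SDP_feas lam Smin Smax Umin Umax Dl Du \<and> \<pi> (L p) = p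
      \<and> SDP_obj lam (L p) = PO_obj lam Smin Smax Umin Umax p"
    if "p \<in> PO_feas lam Smin Smax Umin Umax Dl Du" for p
    using that by blast
  have "(\<exists>q. \<pi> q = (G, W) \<and> is_opt (SDP_feas lam Smin Smax Umin Umax Dl Du) (SDP_obj lam) q)
      \<longleftrightarrow> (\<exists>Nu Ns. is_opt (SDP_feas lam Smin Smax Umin Umax Dl Du) (SDP_obj lam) (G, W, Nu, Ns))"
    for G W unfolding \<pi>_def by force
  with INF_eq_if_proj_lift[OF proj lift_obj] is_opt_iff_if_proj_lift[OF proj lift]
  show ?thesis by simp
qed

end
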